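(* Let $a\in\mathbb{R}\cup\{-\infty\}$, $b\in\mathbb{R}\cup\{+\infty\}$, $a<b$, and let $\gamma:[a,b)\to\mathbb{E}^2$ be a continuous parametric curve in the Euclidean plane (continuity at $a=-\infty$ being understood in the order topology of the extended real line) which is not constant on any neighborhood of the point $a$. For $t\in[a,b)$ let $D(t)$ be the Euclidean distance between $\gamma(a)$ and $\gamma(t)$. For $t\in(a,b)$ let $S(t)$ be the set of all $\tau\in(a,t]$ such that $\gamma(\tau)$ is a support point for the chord $[\gamma(a),\gamma(t)]$, and let $DS(t)=\sup\{D(\tau)\,:\,\tau\in S(t)\}$; when $D(t)=0$ set $DS(t)/D(t)=+\infty$. Then $$\varlimsup_{t\to a}\frac{DS(t)}{D(t)}\ \geq\ \frac{1}{e}.$$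
   Context: Support points: let $\gamma:I\to\mathbb{E}^2$ be a continuous curve on an interval $I$ and $[c,d]\subset I$. If $\gamma(c)\neq\gamma(d)$, a point $\gamma(\tau_0)$ with $\tau_0\in[c,d]$ is called a support point for the chord $[\gamma(c),\gamma(d)]$ if the straight line $l$ through $\gamma(\tau_0)$ parallel to the segment $[\gamma(c),\gamma(d)]$ has the property that for all $\tau\in I$ sufficiently close to $\tau_0$ the points $\gamma(\tau)$ lie in one and the same (closed) half-plane determined by $l$; equivalently, $\tau_0$ is a point of local extremum of $\tau\mapsto\det\bigl(\gamma(d)-\gamma(c),\ \gamma(\tau)\bigr)$ (determinant of the $2\times2$ matrix with these rows, in Cartesian coordinates). If $\gamma(c)=\gamma(d)$, then by convention every point $\gamma(\tau_0)$ with $\tau_0\in[c,d]$ is a support point for the (degenerate) chord $[\gamma(c),\gamma(d)]$. *)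

theory Defs
  imports "HOL-Analysis.Analysis" "HOL-Library.Extended_Real"
begin

definition det2 :: "real^2 \<Rightarrow> real^2 \<Rightarrow> real" where
  "det2 u v = u$1 * v$2 - u$2 * v$1"

text \<open>Degenerate chords: every point is a support point.\<close>
definition support_point ::
  "(ereal \<Rightarrow> real^2) \<Rightarrow> ereal set \<Rightarrow> ereal \<Rightarrow> ereal \<Rightarrow> ereal \<Rightarrow> bool" where
  "support_point \<gamma> I c d \<tau>0 \<longleftrightarrow> \<tau>0 \<in> {c..d} \<and>
     (\<gamma> c = \<gamma> d \<or>
      (\<forall>\<^sub>F \<tau> in at \<tau>0 within I. det2 (\<gamma> d - \<gamma> c) (\<gamma> \<tau>) \<le> det2 (\<gamma> d - \<gamma> c) (\<gamma> \<tau>0)) \<or>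
      (\<forall>\<^sub>F \<tau> in at \<tau>0 within I. det2 (\<gamma> d - \<gamma> c) (\<gamma> \<tau>) \<ge> det2 (\<gamma> d - \<gamma> c) (\<gamma> \<tau>0)))"

definition supp_set :: "(ereal \<Rightarrow> real^2) \<Rightarrow> ereal \<Rightarrow> ereal \<Rightarrow> ereal \<Rightarrow> ereal set" where
  "supp_set \<gamma> a b t = {\<tau> \<in> {a<..t}. support_point \<gamma> {a..<b} a t \<tau>}"

definition DS :: "(ereal \<Rightarrow> real^2) \<Rightarrow> ereal \<Rightarrow> ereal \<Rightarrow> ereal \<Rightarrow> real" where
  "DS \<gamma> a b t = Sup ((\<lambda>\<tau>. dist (\<gamma> a) (\<gamma> \<tau>)) ` supp_set \<gamma> a b t)"

definition ratio_DS_D :: "(ereal \<Rightarrow> real^2) \<Rightarrow> ereal \<Rightarrow> ereal \<Rightarrow> ereal \<Rightarrow> ereal" where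
  "ratio_DS_D \<gamma> a b t =
     (if dist (\<gamma> a) (\<gamma> t) = 0 then \<infinity> else ereal (DS \<gamma> a b t / dist (\<gamma> a) (\<gamma> t)))"

end

theory Submission
  imports Defs
begin

text \<open>Write \<open>z(x) = \<gamma>(x) - \<gamma>(a)\<close> in polar form \<open>exp (u(x) + i \<theta>(x))\<close>; then \<open>u \<rightarrow> -\<infinity>\<close> at \<open>a\<close>.
  The point \<open>\<gamma>(\<tau>)\<close> supports the chord to \<open>\<gamma>(t)\<close> when \<open>\<tau>\<close> is a local extremum of
  \<open>det (z(t), z(x)) = exp (u(t) + u(x)) sin (\<theta>(x) - \<theta>(t))\<close>, and \<open>D(\<tau>) / D(t) = exp (u(\<tau>) - u(t))\<close>.
  So for every \<open>L > 1\<close> we need, arbitrarily close to \<open>a\<close>, such a \<open>\<tau> \<le> t\<close> with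
  \<open>u(\<tau>) \<ge> u(t) - L\<close>. If \<open>\<theta>\<close> has a local extremum at \<open>t\<close>, then \<open>\<tau> = t\<close> works; otherwise \<open>\<theta>\<close>
  is strictly monotone, say increasing. Assume that no such pair exists. On a window \<open>[s, t]\<close>,
  where \<open>u\<close> stays above \<open>u(t) - L\<close>, the determinant is then injective, so the curve turns by
  less than \<open>\<pi>\<close> there and, as \<open>sin x / x\<close> decreases, \<open>u(b) - u(a) < (\<theta>(b) - \<theta>(a)) / (\<theta>(t) - \<theta>(b))\<close>
  for \<open>a < b < t\<close> in the window. Summing this along a rise of \<open>u\<close> by \<open>L\<close> shows that some point
  of the rise starts only windows turning by at most \<open>1/L'\<close> of the angle of the rise, for a
  fixed \<open>1 < L' < L\<close>. Iterating, we find windows turning arbitrarily little, whereas the rises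
  by \<open>L\<close> inside a fixed compact interval turn by a definite positive angle.\<close>

lemma mult_cos_le_sin:
  fixes x :: real
  assumes "0 \<le> x" "x \<le> pi"
  shows "x * cos x \<le> sin x"
proof -
  have "(\<lambda>y. sin y - y * cos y) 0 \<le> (\<lambda>y. sin y - y * cos y) x"
  proof (rule DERIV_nonneg_imp_nondecreasing[OF \<open>0 \<le> x\<close>])
    fix y assume "0 \<le> y" "y \<le> x"
    then have "0 \<le> y * sin y"
      using assms by (simp add: sin_ge_zero)
    moreover have "((\<lambda>y. sin y - y * cos y) has_real_derivative y * sin y) (at y)"
      by (auto intro!: derivative_eq_intros)
    ultimately show "\<exists>d. ((\<lambda>y. sin y - y * cos y) has_real_derivative d) (at y) \<and> 0 \<le> d"
      by blast
  qed
  then show ?thesis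
    by simp
qed

lemma sin_div_antimono:
  fixes A B :: real
  assumes "0 < B" "B \<le> A" "A \<le> pi"
  shows "sin A / A \<le> sin B / B"
proof (rule DERIV_nonpos_imp_nonincreasing[where f = "\<lambda>x. sin x / x", OF \<open>B \<le> A\<close>])
  fix x assume x: "B \<le> x" "x \<le> A"
  then have "x * cos x - sin x \<le> 0"
    using mult_cos_le_sin[of x] assms by simp
  moreover have "((\<lambda>x. sin x / x) has_real_derivative (x * cos x - sin x) / x\<^sup>2) (at x)"
    using x assms by (auto intro!: derivative_eq_intros simp: divide_simps power2_eq_square)
  ultimately show "\<exists>d. ((\<lambda>x. sin x / x) has_real_derivative d) (at x) \<and> d \<le> 0"
    by (auto intro!: divide_nonpos_nonneg)
qed

section \<open>Local extrema\<close>

definition local_extremum :: "(real \<Rightarrow> real) \<Rightarrow> real \<Rightarrow> bool" where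
  "local_extremum f x \<longleftrightarrow> (\<forall>\<^sub>F y in at x. f y \<le> f x) \<or> (\<forall>\<^sub>F y in at x. f x \<le> f y)"

lemma local_extremum_uminus_iff [simp]:
  "local_extremum (\<lambda>y. - f y) x \<longleftrightarrow> local_extremum f x"
  by (auto simp: local_extremum_def)

lemma local_extremum_diff_const_iff [simp]:
  "local_extremum (\<lambda>y. f y - c) x \<longleftrightarrow> local_extremum f x"
  by (simp add: local_extremum_def)

lemma local_extremum_cong:
  assumes "\<forall>\<^sub>F y in nhds x. f y = g y" "local_extremum f x"
  shows "local_extremum g x"
proof -
  have "f x = g x"
    using assms(1) eventually_nhds_x_imp_x by blast
  moreover have eq: "\<forall>\<^sub>F y in at x. f y = g y"
    using assms(1) by (simp add: eventually_at_filter eventually_mono)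
  ultimately have "(\<forall>\<^sub>F y in at x. f y \<le> f x) = (\<forall>\<^sub>F y in at x. g y \<le> g x)"
    "(\<forall>\<^sub>F y in at x. f x \<le> f y) = (\<forall>\<^sub>F y in at x. g x \<le> g y)"
    by (auto intro!: eventually_subst[OF eq[THEN eventually_mono]])
  then show ?thesis
    using assms(2) by (simp add: local_extremum_def)
qed

lemma local_extremum_compose:
  assumes "local_extremum f (h x)" "filterlim h (at (h x)) (at x)"
  shows "local_extremum (\<lambda>y. f (h y)) x"
  using assms eventually_compose_filterlim unfolding local_extremum_def by blast

lemma local_extremum_between:
  fixes f :: "real \<Rightarrow> real"
  assumes "x < y" "continuous_on {x..y} f" "f x = f y"
  obtains \<tau> where "\<tau> \<in> {x<..<y}" "local_extremum f \<tau>"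
proof -
  obtain \<tau> where \<tau>: "\<tau> \<in> {x<..<y}"
      "(\<forall>w\<in>{x..y}. f w \<le> f \<tau>) \<or> (\<forall>w\<in>{x..y}. f \<tau> \<le> f w)"
    using continuous_IVT_local_extremum[of x y f] assms
    by (auto simp: closed_segment_eq_real_ivl open_segment_eq_real_ivl)
  have near: "\<forall>\<^sub>F w in at \<tau>. w \<in> {x..y}"
    using eventually_at_in_open'[of "{x<..<y}" \<tau>] \<tau>(1) by (auto elim: eventually_mono)
  have "(\<forall>\<^sub>F w in at \<tau>. f w \<le> f \<tau>) \<or> (\<forall>\<^sub>F w in at \<tau>. f \<tau> \<le> f w)"
    using \<tau>(2)
  proof
    assume "\<forall>w\<in>{x..y}. f w \<le> f \<tau>"
    with near show ?thesis
      by (intro disjI1) (auto elim: eventually_mono)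
  next
    assume "\<forall>w\<in>{x..y}. f \<tau> \<le> f w"
    with near show ?thesis
      by (intro disjI2) (auto elim: eventually_mono)
  qed
  then have "local_extremum f \<tau>"
    by (simp add: local_extremum_def)
  with \<tau>(1) show ?thesis
    using that by blast
qed

lemma inj_on_if_no_local_extremum:
  fixes f :: "real \<Rightarrow> real"
  assumes "is_interval S" "continuous_on S f" "\<And>\<tau>. \<tau> \<in> S \<Longrightarrow> \<not> local_extremum f \<tau>"
  shows "inj_on f S"
proof -
  have no_repeat: "f x \<noteq> f y" if "x \<in> S" "y \<in> S" "x < y" for x y
  proof
    assume "f x = f y"
    have "{x..y} \<subseteq> S"
      using assms(1) that unfolding is_interval_1 by (metis atLeastAtMost_iff subsetI)
    moreover obtain \<tau> where "\<tau> \<in> {x<..<y}" "local_extremum f \<tau>"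
      using local_extremum_between[OF \<open>x < y\<close> continuous_on_subset[OF assms(2)] \<open>f x = f y\<close>]
        \<open>{x..y} \<subseteq> S\<close> by blast
    ultimately show False
      using assms(3) by (auto simp: subset_iff)
  qed
  show ?thesis
  proof (rule inj_onI)
    fix x y assume xy: "x \<in> S" "y \<in> S" "f x = f y"
    show "x = y"
      using no_repeat[OF xy(1,2)] no_repeat[OF xy(2,1)] xy(3) by (cases x y rule: linorder_cases) auto
  qed
qed

lemma local_extremum_or_strict_monotone:
  fixes f :: "real \<Rightarrow> real"
  assumes "is_interval S" "continuous_on S f"
  shows "(\<exists>\<tau>\<in>S. local_extremum f \<tau>) \<or> strict_mono_on S f \<or> strict_antimono_on S f"
proof -
  have "inj_on f S \<longleftrightarrow> strict_mono_on S f \<or> strict_antimono_on S f"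
    using injective_eq_monotone_map[OF assms] .
  moreover have "(\<forall>\<tau>\<in>S. \<not> local_extremum f \<tau>) \<longrightarrow> inj_on f S"
    using inj_on_if_no_local_extremum[OF assms] by blast
  ultimately show ?thesis
    by blast
qed

section \<open>Rises of a continuous function\<close>

definition rising_pairs :: "(real \<Rightarrow> real) \<Rightarrow> real \<Rightarrow> real \<Rightarrow> real \<Rightarrow> (real \<times> real) set" where
  "rising_pairs u L x y = {p \<in> {x..y} \<times> {x..y}. fst p \<le> snd p \<and> u (fst p) + L \<le> u (snd p)}"

lemma compact_rising_pairs:
  fixes u :: "real \<Rightarrow> real"
  assumes "continuous_on {x..y} u"
  shows "compact (rising_pairs u L x y)"
proof -
  let ?S = "{x..y} \<times> {x..y}"
  have "continuous_on ?S (\<lambda>p. u (fst p))" "continuous_on ?S (\<lambda>p. u (snd p))"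
    by (auto intro!: continuous_on_compose2[OF assms] continuous_intros)
  then have "closed {p \<in> ?S. u (fst p) + L \<le> u (snd p)}"
    by (intro continuous_on_closed_Collect_le continuous_intros closed_Times) auto
  moreover have "closed {p :: real \<times> real. fst p \<le> snd p}"
    by (intro closed_Collect_le continuous_intros)
  ultimately have "compact (?S \<inter> ({p \<in> ?S. u (fst p) + L \<le> u (snd p)} \<inter> {p. fst p \<le> snd p}))"
    by (intro compact_Int_closed compact_Times closed_Int) auto
  also have "?S \<inter> ({p \<in> ?S. u (fst p) + L \<le> u (snd p)} \<inter> {p. fst p \<le> snd p}) =
      {p \<in> ?S. fst p \<le> snd p \<and> u (fst p) + L \<le> u (snd p)}"
    by auto
  finally show ?thesis
    by (simp only: rising_pairs_def)
qed

lemma exists_first_rise: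
  fixes u :: "real \<Rightarrow> real"
  assumes "continuous_on {x..y} u" "0 < L" "x \<le> y" "u x + L \<le> u y"
  obtains \<mu> \<nu> where "x \<le> \<mu>" "\<mu> < \<nu>" "\<nu> \<le> y" "u \<nu> - u \<mu> = L"
    "\<And>w. w \<in> {x..\<nu>} \<Longrightarrow> u \<nu> - L \<le> u w"
proof -
  define K where "K = rising_pairs u L x y"
  have "compact (snd ` K)"
    unfolding K_def by (intro compact_continuous_image compact_rising_pairs assms continuous_intros)
  moreover have "(x, y) \<in> K"
    using assms by (auto simp: K_def rising_pairs_def)
  ultimately obtain \<nu> where "\<nu> \<in> snd ` K" and \<nu>_least: "\<And>s. s \<in> snd ` K \<Longrightarrow> \<nu> \<le> s"
    using compact_attains_inf[of "snd ` K"] by blast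
  then obtain \<mu> where \<mu>\<nu>: "(\<mu>, \<nu>) \<in> K"
    by auto
  have low: "u \<nu> - L \<le> u w" if w: "w \<in> {x..\<nu>}" for w
  proof (rule ccontr)
    assume drop: "\<not> u \<nu> - L \<le> u w"
    then have "w < \<nu>"
      using assms(2) w by (cases "w = \<nu>") auto
    moreover have "continuous_on {w..\<nu>} u"
      using assms(1) w \<mu>\<nu> by (auto simp: K_def rising_pairs_def elim!: continuous_on_subset)
    ultimately obtain s where s: "w \<le> s" "s \<le> \<nu>" "u s = u w + L"
      using IVT'[of u w "u w + L" \<nu>] drop assms(2) by auto
    then have "(w, s) \<in> K"
      using w \<mu>\<nu> by (auto simp: K_def rising_pairs_def)
    then have "\<nu> \<le> s"
      using \<nu>_least by force
    then show False
      using s drop by auto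
  qed
  have "u \<nu> - u \<mu> = L"
    using low[of \<mu>] \<mu>\<nu> by (auto simp: K_def rising_pairs_def)
  moreover have "\<mu> < \<nu>"
    using \<mu>\<nu> assms(2) by (cases "\<mu> = \<nu>") (auto simp: K_def rising_pairs_def)
  ultimately show ?thesis
    using that \<mu>\<nu> low by (auto simp: K_def rising_pairs_def)
qed

lemma exists_rise_angle_lower_bound:
  fixes u \<theta> :: "real \<Rightarrow> real"
  assumes "continuous_on {x..y} u" "continuous_on {x..y} \<theta>" "strict_mono_on {x..y} \<theta>" "0 < L"
  obtains \<delta> where "0 < \<delta>" "\<And>\<mu> \<nu>. \<mu> \<in> {x..y} \<Longrightarrow> \<nu> \<in> {x..y} \<Longrightarrow> \<mu> \<le> \<nu> \<Longrightarrow>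
    u \<mu> + L \<le> u \<nu> \<Longrightarrow> \<delta> \<le> \<theta> \<nu> - \<theta> \<mu>"
proof -
  define K where "K = rising_pairs u L x y"
  show ?thesis
  proof (cases "K = {}")
    case True
    then show ?thesis
      using that[of 1] by (auto simp: K_def rising_pairs_def)
  next
    case False
    have "continuous_on K (\<lambda>p. \<theta> (snd p) - \<theta> (fst p))"
      unfolding K_def rising_pairs_def
      by (intro continuous_intros continuous_on_compose2[OF assms(2)]) auto
    then obtain p0 where p0: "p0 \<in> K" "\<And>p. p \<in> K \<Longrightarrow> \<theta> (snd p0) - \<theta> (fst p0) \<le> \<theta> (snd p) - \<theta> (fst p)"
      using continuous_attains_inf[OF compact_rising_pairs[OF assms(1)] False[unfolded K_def]]
      unfolding K_def by blast
    have "fst p0 < snd p0"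
      using p0(1) assms(4) by (cases "fst p0 = snd p0") (auto simp: K_def rising_pairs_def)
    then have "0 < \<theta> (snd p0) - \<theta> (fst p0)"
      using p0(1) strict_mono_onD[OF assms(3)] by (auto simp: K_def rising_pairs_def)
    then show ?thesis
      using that[of "\<theta> (snd p0) - \<theta> (fst p0)"] p0(2) by (auto simp: K_def rising_pairs_def)
  qed
qed

lemma increment_less_by_level_steps:
  fixes u \<theta> :: "real \<Rightarrow> real" and n :: nat and c :: real
  assumes "\<mu> < \<nu>" "continuous_on {\<mu>..\<nu>} \<theta>" "strict_mono_on {\<mu>..\<nu>} \<theta>" "0 < n"
    and step: "\<And>a b. a \<in> {\<mu>..\<nu>} \<Longrightarrow> b \<in> {\<mu>..\<nu>} \<Longrightarrow> a < b \<Longrightarrow>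
      \<theta> b - \<theta> a = (\<theta> \<nu> - \<theta> \<mu>) / n \<Longrightarrow> u b - u a < c"
  shows "u \<nu> - u \<mu> < n * c"
proof -
  define h where "h = (\<theta> \<nu> - \<theta> \<mu>) / n"
  have "0 < h"
    using assms(1,3,4) strict_mono_onD[OF assms(3)] by (auto simp: h_def)
  have "\<exists>s. s \<in> {\<mu>..\<nu>} \<and> \<theta> s = \<theta> \<mu> + k * h" if "k \<le> n" for k :: nat
  proof -
    have "k * h \<le> n * h"
      using that \<open>0 < h\<close> by (intro mult_right_mono) auto
    then have "\<theta> \<mu> + k * h \<le> \<theta> \<nu>"
      using assms(4) by (simp add: h_def)
    then show ?thesis
      using IVT'[of \<theta> \<mu> "\<theta> \<mu> + k * h" \<nu>] assms(1,2) \<open>0 < h\<close> by auto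
  qed
  then obtain s where s: "\<And>k. k \<le> n \<Longrightarrow> s k \<in> {\<mu>..\<nu>} \<and> \<theta> (s k) = \<theta> \<mu> + k * h"
    by metis
  have inj: "inj_on \<theta> {\<mu>..\<nu>}"
    using assms(3) by (rule strict_mono_on_imp_inj_on)
  have "s 0 = \<mu>" "s n = \<nu>"
    using inj_onD[OF inj, of "s 0" \<mu>] inj_onD[OF inj, of "s n" \<nu>] s[of 0] s[of n] assms(1,4)
    by (auto simp: h_def)
  have "u (s (Suc k)) - u (s k) < c" if "k < n" for k
  proof (rule step)
    show "s k \<in> {\<mu>..\<nu>}" "s (Suc k) \<in> {\<mu>..\<nu>}"
      using s that by auto
    show "\<theta> (s (Suc k)) - \<theta> (s k) = (\<theta> \<nu> - \<theta> \<mu>) / n"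
      unfolding h_def[symmetric] using s[of k] s[of "Suc k"] that by (simp add: algebra_simps)
    with \<open>0 < h\<close> have "\<theta> (s k) < \<theta> (s (Suc k))"
      by (simp add: h_def)
    then show "s k < s (Suc k)"
      using strict_mono_on_less[OF assms(3), of "s k" "s (Suc k)"] s[of k] s[of "Suc k"] that
      by auto
  qed
  then have "(\<Sum>k<n. u (s (Suc k)) - u (s k)) < (\<Sum>k<n. c)"
    using assms(4) by (intro sum_strict_mono) auto
  then show ?thesis
    using sum_lessThan_telescope[of "\<lambda>k. u (s k)" n] \<open>s 0 = \<mu>\<close> \<open>s n = \<nu>\<close> by simp
qed

section \<open>Spirals without near support points\<close>

definition polar_det :: "(real \<Rightarrow> real) \<Rightarrow> (real \<Rightarrow> real) \<Rightarrow> real \<Rightarrow> real \<Rightarrow> real" where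
  "polar_det u \<theta> t x = exp (u t + u x) * sin (\<theta> x - \<theta> t)"

lemma Im_cnj_exp_mult_exp:
  "Im (cnj (exp (g t)) * exp (g x)) = polar_det (\<lambda>y. Re (g y)) (\<lambda>y. Im (g y)) t x"
proof -
  have "cnj (exp (g t)) * exp (g x) = exp (cnj (g t) + g x)"
    by (simp add: exp_cnj exp_add)
  then show ?thesis
    by (simp add: polar_det_def Im_exp)
qed

lemma sin_diff_commute: "sin (a - b) = - sin (b - a)"
  by (metis minus_diff_eq sin_minus)

lemma polar_det_self [simp]: "polar_det u \<theta> t t = 0"
  by (simp add: polar_det_def)

lemma polar_det_uminus: "polar_det u (\<lambda>x. - \<theta> x) t = (\<lambda>x. - polar_det u \<theta> t x)"
  by (simp add: polar_det_def fun_eq_iff sin_diff_commute[of "\<theta> t"])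

lemma continuous_on_polar_det:
  "continuous_on S u \<Longrightarrow> continuous_on S \<theta> \<Longrightarrow> continuous_on S (polar_det u \<theta> t)"
  unfolding polar_det_def by (intro continuous_intros)

lemma polar_det_nonpos:
  "\<theta> t - pi \<le> \<theta> x \<Longrightarrow> \<theta> x \<le> \<theta> t \<Longrightarrow> polar_det u \<theta> t x \<le> 0"
  using sin_ge_zero[of "\<theta> t - \<theta> x"]
  by (simp add: polar_det_def sin_diff_commute[of "\<theta> x"])

lemma polar_det_nonneg:
  "\<theta> t \<le> \<theta> x \<Longrightarrow> \<theta> x \<le> \<theta> t + pi \<Longrightarrow> 0 \<le> polar_det u \<theta> t x"
  using sin_ge_zero[of "\<theta> x - \<theta> t"] by (simp add: polar_det_def)

lemma local_extremum_polar_det_self: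
  assumes "local_extremum \<theta> t" "isCont \<theta> t"
  shows "local_extremum (polar_det u \<theta> t) t"
proof -
  have near: "\<forall>\<^sub>F x in at t. \<bar>\<theta> x - \<theta> t\<bar> < pi"
    using assms(2) tendstoD[of \<theta> "\<theta> t" "at t" pi] by (simp add: isCont_def dist_real_def)
  from assms(1) have "(\<forall>\<^sub>F x in at t. polar_det u \<theta> t x \<le> 0) \<or>
      (\<forall>\<^sub>F x in at t. 0 \<le> polar_det u \<theta> t x)"
    unfolding local_extremum_def
  proof
    assume "\<forall>\<^sub>F x in at t. \<theta> x \<le> \<theta> t"
    with near have "\<forall>\<^sub>F x in at t. polar_det u \<theta> t x \<le> 0"
      by eventually_elim (auto intro!: polar_det_nonpos)
    then show ?thesis ..
  next
    assume "\<forall>\<^sub>F x in at t. \<theta> t \<le> \<theta> x"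
    with near have "\<forall>\<^sub>F x in at t. 0 \<le> polar_det u \<theta> t x"
      by eventually_elim (auto intro!: polar_det_nonneg)
    then show ?thesis ..
  qed
  then show ?thesis
    by (simp add: local_extremum_def)
qed

locale spiral_without_near_support =
  fixes p q L :: real and u \<theta> :: "real \<Rightarrow> real"
  assumes p_less_q: "p < q"
    and continuous_u: "continuous_on {p<..q} u"
    and continuous_\<theta>: "continuous_on {p<..q} \<theta>"
    and u_tendsto_at_bot: "filterlim u at_bot (at_right p)"
    and strict_mono_\<theta>: "strict_mono_on {p<..<q} \<theta>"
    and L_gt_1: "1 < L"
    and no_support: "\<And>t \<tau>. t \<in> {p<..<q} \<Longrightarrow> \<tau> \<in> {p<..t} \<Longrightarrow> u t - L \<le> u \<tau> \<Longrightarrow>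
      \<not> local_extremum (polar_det u \<theta> t) \<tau>"
begin

lemma \<theta>_less_iff: "x \<in> {p<..<q} \<Longrightarrow> y \<in> {p<..<q} \<Longrightarrow> \<theta> x < \<theta> y \<longleftrightarrow> x < y"
  using strict_mono_on_less[OF strict_mono_\<theta>] .

lemma \<theta>_le_iff: "x \<in> {p<..<q} \<Longrightarrow> y \<in> {p<..<q} \<Longrightarrow> \<theta> x \<le> \<theta> y \<longleftrightarrow> x \<le> y"
  using strict_mono_on_less_eq[OF strict_mono_\<theta>] .

lemma u_less_near_p:
  obtains b where "p < b" "\<And>x. p < x \<Longrightarrow> x < b \<Longrightarrow> u x < M"
  using u_tendsto_at_bot unfolding filterlim_at_bot_dense eventually_at_right_field by blast

text \<open>On a window \<open>[s, t]\<close> every point is excluded by \<open>no_support\<close> as a support point for the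
  chord to \<open>t\<close>.\<close>
definition window :: "real \<Rightarrow> real \<Rightarrow> bool" where
  "window s t \<longleftrightarrow> p < s \<and> s \<le> t \<and> t < q \<and> (\<forall>x\<in>{s..t}. u t - L \<le> u x)"

lemma window_shrink: "window s t \<Longrightarrow> s \<le> s' \<Longrightarrow> s' \<le> t \<Longrightarrow> window s' t"
  by (auto simp: window_def)

lemma window_subset: "window s t \<Longrightarrow> {s..t} \<subseteq> {p<..<q}"
  by (auto simp: window_def)

lemma continuous_on_window:
  assumes "window s t"
  shows "continuous_on {s..t} \<theta>" "continuous_on {s..t} (polar_det u \<theta> t)"
  using window_subset[OF assms]
  by (auto intro!: continuous_on_subset[OF continuous_\<theta>]
      continuous_on_subset[OF continuous_on_polar_det[OF continuous_u continuous_\<theta>]])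

lemma inj_on_window:
  assumes "window s t"
  shows "inj_on (polar_det u \<theta> t) {s..t}"
proof (rule inj_on_if_no_local_extremum[OF is_interval_cc continuous_on_window(2)[OF assms]])
  fix \<tau> assume "\<tau> \<in> {s..t}"
  then show "\<not> local_extremum (polar_det u \<theta> t) \<tau>"
    using assms by (intro no_support) (auto simp: window_def)
qed

lemma window_angle_less_pi:
  assumes "window s t"
  shows "\<theta> t - \<theta> s < pi"
proof (rule ccontr)
  assume "\<not> ?thesis"
  then obtain x where x: "s \<le> x" "x \<le> t" "\<theta> x = \<theta> t - pi"
    using IVT'[of \<theta> s "\<theta> t - pi" t] continuous_on_window[OF assms] assms
    by (auto simp: window_def)
  then have "polar_det u \<theta> t x = polar_det u \<theta> t t" "x \<noteq> t"
    by (auto simp: polar_det_def)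
  then show False
    using inj_onD[OF inj_on_window[OF assms]] x by auto
qed

lemma window_polar_det_neg:
  assumes "window s t" "s \<le> y" "y < t"
  shows "polar_det u \<theta> t y < 0"
proof -
  have "\<theta> y < \<theta> t"
    using assms \<theta>_less_iff by (auto simp: window_def)
  moreover have "\<theta> t - \<theta> y < pi"
    using window_angle_less_pi[OF window_shrink[OF assms(1,2)]] assms(3) by simp
  ultimately have "0 < sin (\<theta> t - \<theta> y)"
    by (intro sin_gt_zero) auto
  then show ?thesis
    by (simp add: polar_det_def sin_diff_commute[of "\<theta> y"])
qed

lemma window_polar_det_less:
  assumes "window s t" "s \<le> x" "x < y" "y < t"
  shows "polar_det u \<theta> t x < polar_det u \<theta> t y"
proof -
  have "window x t"
    using assms by (auto intro: window_shrink)
  then have "(polar_det u \<theta> t x < polar_det u \<theta> t y \<and> polar_det u \<theta> t y < polar_det u \<theta> t t) \<or>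
      (polar_det u \<theta> t t < polar_det u \<theta> t y \<and> polar_det u \<theta> t y < polar_det u \<theta> t x)"
    by (intro continuous_inj_imp_mono[OF assms(3,4)] continuous_on_window(2) inj_on_window)
  then show ?thesis
    using window_polar_det_neg[OF assms(1) _ assms(4)] assms(2,3) by auto
qed

lemma window_increment_less:
  assumes "window a t" "a < b" "b < t"
  shows "u b - u a < (\<theta> b - \<theta> a) / (\<theta> t - \<theta> b)"
proof -
  define A B where "A = \<theta> t - \<theta> a" and "B = \<theta> t - \<theta> b"
  have "0 < B" "B < A"
    using assms \<theta>_less_iff by (auto simp: window_def A_def B_def)
  have "A < pi"
    using window_angle_less_pi[OF assms(1)] by (simp add: A_def)
  have "0 < sin B"
    using \<open>0 < B\<close> \<open>B < A\<close> \<open>A < pi\<close> by (intro sin_gt_zero) auto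
  have "- (exp (u t) * (exp (u a) * sin A)) < - (exp (u t) * (exp (u b) * sin B))"
    using window_polar_det_less[OF assms(1) order_refl assms(2,3)]
    by (simp add: polar_det_def A_def B_def exp_add mult.assoc
        sin_diff_commute[of "\<theta> a"] sin_diff_commute[of "\<theta> b"])
  then have "exp (u b) * sin B < exp (u a) * sin A"
    by simp
  also have "\<dots> \<le> exp (u a) * (A / B) * sin B"
    using sin_div_antimono[of B A] \<open>0 < B\<close> \<open>B < A\<close> \<open>A < pi\<close>
    by (simp add: field_simps)
  finally have "exp (u b) < exp (u a) * (A / B)"
    using mult_right_less_imp_less \<open>0 < sin B\<close> less_imp_le by blast
  then have "exp (u b - u a) < A / B"
    by (simp add: exp_diff pos_divide_less_eq mult.commute)
  moreover have "0 < A / B"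
    using \<open>0 < B\<close> \<open>B < A\<close> by simp
  ultimately have "u b - u a < ln (A / B)"
    using ln_less_cancel_iff[of "exp (u b - u a)" "A / B"] by simp
  also have "\<dots> \<le> A / B - 1"
    using \<open>0 < B\<close> \<open>B < A\<close> by (intro ln_le_minus_one) auto
  also have "\<dots> = (\<theta> b - \<theta> a) / (\<theta> t - \<theta> b)"
    using \<open>0 < B\<close> by (simp add: A_def B_def field_simps)
  finally show ?thesis .
qed

lemma exists_rise_window:
  assumes "p < x" "x \<le> t0" "t0 < q" "u x + L \<le> u t0"
  obtains \<mu> \<nu> where "x \<le> \<mu>" "\<mu> < \<nu>" "\<nu> \<le> t0" "u \<nu> - u \<mu> = L" "window x \<nu>"
proof -
  have "continuous_on {x..t0} u"
    using assms by (auto intro!: continuous_on_subset[OF continuous_u])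
  then obtain \<mu> \<nu> where "x \<le> \<mu>" "\<mu> < \<nu>" "\<nu> \<le> t0" "u \<nu> - u \<mu> = L"
      "\<And>w. w \<in> {x..\<nu>} \<Longrightarrow> u \<nu> - L \<le> u w"
    using exists_first_rise[of x t0 u L] L_gt_1 assms(2,4) by auto
  moreover from this have "window x \<nu>"
    using assms by (auto simp: window_def)
  ultimately show ?thesis
    using that by blast
qed

definition reach_le :: "real \<Rightarrow> real \<Rightarrow> bool" where
  "reach_le x w \<longleftrightarrow> (\<forall>t. window x t \<longrightarrow> \<theta> t - \<theta> x \<le> w)"

lemma reach_le_mono: "reach_le x w \<Longrightarrow> w \<le> w' \<Longrightarrow> reach_le x w'"
  by (auto simp: reach_le_def)

lemma reach_le_pi: "reach_le x pi"
  using window_angle_less_pi by (auto simp: reach_le_def less_imp_le)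

lemma reach_le_if_rise_impossible:
  assumes "p < x" "x < y" "y < q" "\<And>z. z \<in> {y..q} \<Longrightarrow> u x + L < u z"
  shows "reach_le x (\<theta> y - \<theta> x)"
  unfolding reach_le_def
proof (intro allI impI)
  fix t assume t: "window x t"
  have "t < y"
  proof (rule ccontr)
    assume "\<not> t < y"
    then have "u x + L < u t"
      using assms(4) t by (auto simp: window_def)
    moreover have "u t - L \<le> u x"
      using t by (auto simp: window_def)
    ultimately show False
      by simp
  qed
  then show "\<theta> t - \<theta> x \<le> \<theta> y - \<theta> x"
    using \<theta>_le_iff[of t y] t assms by (auto simp: window_def)
qed

text \<open>If every point of the rise started a window turning by more than \<open>1/L'\<close> of the angle of
  the rise, then cutting that angle into \<open>n\<close> equal pieces, \<open>window_increment_less\<close> would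
  bound the height \<open>L\<close> of the rise by less than \<open>n L' / (n - L') \<le> L\<close>.\<close>
lemma slow_point_in_rise:
  assumes "window x \<nu>" "x \<le> \<mu>" "\<mu> < \<nu>" "u \<nu> - u \<mu> = L" "1 < L'" "L' < L"
  obtains m where "m \<in> {\<mu>..\<nu>}" "reach_le m ((\<theta> \<nu> - \<theta> \<mu>) / L')"
proof (rule ccontr)
  assume no_slow: "\<not> thesis"
  define D where "D = \<theta> \<nu> - \<theta> \<mu>"
  have sub: "{\<mu>..\<nu>} \<subseteq> {p<..<q}"
    using assms(1,2) by (auto simp: window_def)
  then have "0 < D"
    using \<theta>_less_iff[of \<mu> \<nu>] assms(3) by (simp add: D_def subset_iff)
  obtain n :: nat where n: "L * L' / (L - L') \<le> n"
    using real_arch_simple by blast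
  have "L' < L * L' / (L - L')"
    using assms(5,6) by (simp add: field_simps)
  with n have "L' < n"
    by linarith
  have "0 < D / n"
    using \<open>0 < D\<close> \<open>L' < n\<close> assms(5) by simp
  have bound: "n * (L' / (n - L')) \<le> L"
    using n \<open>L' < n\<close> assms(5,6) by (simp add: field_simps)
  have "u \<nu> - u \<mu> < n * (L' / (n - L'))"
  proof (rule increment_less_by_level_steps[where u = u and \<theta> = \<theta>])
    show "\<mu> < \<nu>"
      using assms(3) .
    show "0 < n"
      using assms(5) \<open>L' < n\<close> by simp
    show "continuous_on {\<mu>..\<nu>} \<theta>"
      using sub by (auto intro!: continuous_on_subset[OF continuous_\<theta>])
    show "strict_mono_on {\<mu>..\<nu>} \<theta>"
      using sub by (rule monotone_on_subset[OF strict_mono_\<theta>])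
    fix a b assume ab: "a \<in> {\<mu>..\<nu>}" "b \<in> {\<mu>..\<nu>}" "a < b" "\<theta> b - \<theta> a = (\<theta> \<nu> - \<theta> \<mu>) / n"
    have "\<not> reach_le a (D / L')"
      using no_slow that[of a] ab(1) by (auto simp: D_def)
    then obtain t where t: "window a t" "D / L' < \<theta> t - \<theta> a"
      by (auto simp: reach_le_def not_le)
    have "D / n < D / L'"
      using \<open>0 < D\<close> \<open>L' < n\<close> assms(5) by (intro divide_strict_left_mono) auto
    then have "\<theta> b < \<theta> t"
      using ab(4) t(2) by (simp add: D_def)
    then have "b < t"
      using \<theta>_less_iff[of b t] ab(2) sub t(1) by (auto simp: window_def)
    have "u b - u a < (D / n) / (\<theta> t - \<theta> b)"
      using window_increment_less[OF t(1) ab(3) \<open>b < t\<close>] ab(4) by (simp add: D_def)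
    also have "\<dots> < (D / n) / (D / L' - D / n)"
      using ab(4) t(2) \<open>D / n < D / L'\<close> \<open>0 < D / n\<close>
      by (intro divide_strict_left_mono) (auto simp: D_def)
    also have "\<dots> = L' / (n - L')"
      using \<open>0 < D\<close> \<open>L' < n\<close> assms(5) by (simp add: field_simps)
    finally show "u b - u a < L' / (n - L')" .
  qed
  with bound assms(4) show False
    by simp
qed

lemma reach_step:
  assumes "p < x" "x \<le> t0" "t0 < q" "u x + L \<le> u t0" "reach_le x w" "1 < L'" "L' < L"
  obtains m where "x \<le> m" "m \<le> t0" "\<theta> m \<le> \<theta> x + w" "reach_le m (w / L')"
proof -
  obtain \<mu> \<nu> where rise: "x \<le> \<mu>" "\<mu> < \<nu>" "\<nu> \<le> t0" "u \<nu> - u \<mu> = L" "window x \<nu>"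
    using exists_rise_window assms(1-4) by blast
  obtain m where m: "m \<in> {\<mu>..\<nu>}" "reach_le m ((\<theta> \<nu> - \<theta> \<mu>) / L')"
    using slow_point_in_rise[OF rise(5,1,2,4) assms(6,7)] .
  have in_I: "x \<in> {p<..<q}" "\<mu> \<in> {p<..<q}" "m \<in> {p<..<q}" "\<nu> \<in> {p<..<q}"
    using assms(1,3) rise m(1) by auto
  have "\<theta> \<nu> - \<theta> x \<le> w"
    using assms(5) rise(5) by (auto simp: reach_le_def)
  moreover have "\<theta> x \<le> \<theta> \<mu>" "\<theta> m \<le> \<theta> \<nu>"
    using \<theta>_le_iff in_I rise(1) m(1) by auto
  ultimately have "reach_le m (w / L')"
    using assms(6) by (intro reach_le_mono[OF m(2)] divide_right_mono) auto
  moreover have "\<theta> m \<le> \<theta> x + w"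
    using \<open>\<theta> m \<le> \<theta> \<nu>\<close> \<open>\<theta> \<nu> - \<theta> x \<le> w\<close> by linarith
  moreover have "x \<le> m" "m \<le> t0"
    using m(1) rise(1,3) by auto
  ultimately show ?thesis
    using that by blast
qed

lemma reach_iterate:
  assumes "p < x0" "x0 \<le> \<delta>0" "\<delta>0 < t0" "t0 < q"
    and below: "\<And>x. x \<in> {p<..\<delta>0} \<Longrightarrow> u x + L \<le> u t0"
    and "reach_le x0 w0" "0 < w0" "\<theta> x0 + w0 * (L' / (L' - 1)) \<le> \<theta> \<delta>0" "1 < L'" "L' < L"
  obtains x where "x0 \<le> x" "x \<le> \<delta>0" "reach_le x (w0 / L' ^ k)"
proof -
  define C where "C = L' / (L' - 1)"
  have "0 < C" "1 + C / L' = C"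
    using assms(9) by (auto simp: C_def field_simps)
  define good where "good x w \<longleftrightarrow> x0 \<le> x \<and> x \<le> \<delta>0 \<and> reach_le x w \<and> \<theta> x + w * C \<le> \<theta> \<delta>0"
    for x w
  have "\<exists>x. good x (w0 / L' ^ k)"
  proof (induction k)
    case 0
    show ?case
      using assms by (auto simp: good_def C_def)
  next
    case (Suc k)
    then obtain x where x: "good x (w0 / L' ^ k)"
      by blast
    define w where "w = w0 / L' ^ k"
    have "0 < w"
      using assms(7,9) by (simp add: w_def)
    obtain m where m: "x \<le> m" "m \<le> t0" "\<theta> m \<le> \<theta> x + w" "reach_le m (w / L')"
      using reach_step[of x t0 w L'] x below[of x] assms unfolding good_def w_def by auto
    have "\<theta> m + w / L' * C \<le> \<theta> x + w * (1 + C / L')"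
      using m(3) by (simp add: algebra_simps)
    also have "\<dots> \<le> \<theta> \<delta>0"
      using x \<open>1 + C / L' = C\<close> by (simp add: good_def w_def)
    finally have room: "\<theta> m + w / L' * C \<le> \<theta> \<delta>0" .
    moreover have "0 < w / L' * C"
      using \<open>0 < w\<close> \<open>0 < C\<close> assms(9) by simp
    ultimately have "\<theta> m \<le> \<theta> \<delta>0"
      by linarith
    then have "m \<le> \<delta>0"
      using \<theta>_le_iff[of m \<delta>0] x m(1,2) assms by (auto simp: good_def)
    then have "good m (w0 / L' ^ Suc k)"
      using x m room by (auto simp: good_def w_def field_simps)
    then show ?case
      by blast
  qed
  then show ?thesis
    using that by (auto simp: good_def)
qed

lemma exists_reach_le_before:
  assumes "p < y" "y < q"
  obtains x0 where "p < x0" "x0 < y" "reach_le x0 (\<theta> y - \<theta> x0)"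
proof -
  have "{y..q} \<subseteq> {p<..q}" "{y..q} \<noteq> {}"
    using assms by auto
  then obtain z0 where z0: "\<And>z. z \<in> {y..q} \<Longrightarrow> u z0 \<le> u z"
    using continuous_attains_inf[OF compact_Icc _ continuous_on_subset[OF continuous_u]] by metis
  obtain b where b: "p < b" "\<And>x. p < x \<Longrightarrow> x < b \<Longrightarrow> u x < u z0 - L"
    using u_less_near_p by blast
  define x0 where "x0 = (p + min b y) / 2"
  have x0: "p < x0" "x0 < y" "x0 < b"
    using b(1) assms(1) by (auto simp: x0_def)
  have "u x0 + L < u z" if "z \<in> {y..q}" for z
    using b(2)[OF x0(1,3)] z0[OF that] by simp
  then have "reach_le x0 (\<theta> y - \<theta> x0)"
    using x0 assms by (intro reach_le_if_rise_impossible) auto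
  with x0 show thesis
    using that by blast
qed

lemma exists_initial_reach:
  assumes "p < \<delta>0" "\<delta>0 < q" "0 < C"
  obtains x0 w0 where "p < x0" "x0 \<le> \<delta>0" "0 < w0" "reach_le x0 w0" "\<theta> x0 + w0 * C \<le> \<theta> \<delta>0"
proof (cases "bdd_below (\<theta> ` {p<..\<delta>0})")
  case False
  then have "\<forall>M. \<exists>x\<in>{p<..\<delta>0}. \<theta> x < M"
    by (auto simp: bdd_below_def not_le)
  then obtain x0 where "x0 \<in> {p<..\<delta>0}" "\<theta> x0 < \<theta> \<delta>0 - pi * C"
    by blast
  then show ?thesis
    using that[of x0 pi] reach_le_pi by auto
next
  case True
  define \<beta> where "\<beta> = Inf (\<theta> ` {p<..\<delta>0})"
  have \<beta>_le: "\<beta> \<le> \<theta> x" if "x \<in> {p<..\<delta>0}" for x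
    unfolding \<beta>_def using True that by (auto intro: cInf_lower)
  have "\<theta> ((p + \<delta>0) / 2) < \<theta> \<delta>0"
    using \<theta>_less_iff[of "(p + \<delta>0) / 2" \<delta>0] assms by auto
  then have "\<beta> < \<theta> \<delta>0"
    using \<beta>_le[of "(p + \<delta>0) / 2"] assms by auto
  define \<epsilon> where "\<epsilon> = (\<theta> \<delta>0 - \<beta>) / (1 + C)"
  have "0 < \<epsilon>"
    using \<open>\<beta> < \<theta> \<delta>0\<close> assms(3) by (simp add: \<epsilon>_def)
  have "\<epsilon> * (1 + C) = \<theta> \<delta>0 - \<beta>"
    using assms(3) by (simp add: \<epsilon>_def)
  then have \<epsilon>: "\<beta> + \<epsilon> + \<epsilon> * C = \<theta> \<delta>0"
    by (simp add: algebra_simps)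
  obtain y where y: "y \<in> {p<..\<delta>0}" "\<theta> y < \<beta> + \<epsilon>"
    using cInf_lessD[of "\<theta> ` {p<..\<delta>0}" "\<beta> + \<epsilon>"] \<open>0 < \<epsilon>\<close> assms(1) unfolding \<beta>_def by auto
  obtain x0 where x0: "p < x0" "x0 < y" "reach_le x0 (\<theta> y - \<theta> x0)"
    using exists_reach_le_before[of y] y assms(2) by auto
  have "\<theta> y - \<theta> x0 \<le> \<epsilon>"
    using \<beta>_le[of x0] x0 y by auto
  moreover have "\<theta> x0 < \<theta> y"
    using \<theta>_less_iff[of x0 y] x0 y assms by auto
  ultimately show ?thesis
    using that[of x0 \<epsilon>] reach_le_mono[OF x0(3)] x0 y \<open>0 < \<epsilon>\<close> \<epsilon> by auto
qed

lemma exists_low_start: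
  assumes "p < t0"
  obtains \<delta>0 where "p < \<delta>0" "\<delta>0 < t0" "\<And>x. x \<in> {p<..\<delta>0} \<Longrightarrow> u x + L \<le> u t0"
proof -
  obtain b where b: "p < b" "\<And>x. p < x \<Longrightarrow> x < b \<Longrightarrow> u x < u t0 - L"
    using u_less_near_p by blast
  define \<delta>0 where "\<delta>0 = (p + min b t0) / 2"
  have "p < \<delta>0" "\<delta>0 < t0" "\<And>x. x \<in> {p<..\<delta>0} \<Longrightarrow> u x + L \<le> u t0"
    using b assms by (fastforce simp: \<delta>0_def)+
  then show thesis
    using that by blast
qed

lemma contradiction: False
proof -
  define t0 where "t0 = (p + q) / 2"
  have t0: "p < t0" "t0 < q"
    using p_less_q by (auto simp: t0_def)
  obtain \<delta>0 where \<delta>0: "p < \<delta>0" "\<delta>0 < t0" "\<And>x. x \<in> {p<..\<delta>0} \<Longrightarrow> u x + L \<le> u t0"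
    using exists_low_start[OF t0(1)] by blast
  define L' where "L' = (1 + L) / 2"
  have L': "1 < L'" "L' < L"
    using L_gt_1 by (auto simp: L'_def)
  obtain x0 w0 where x0: "p < x0" "x0 \<le> \<delta>0" "0 < w0" "reach_le x0 w0"
      "\<theta> x0 + w0 * (L' / (L' - 1)) \<le> \<theta> \<delta>0"
    using exists_initial_reach[of \<delta>0 "L' / (L' - 1)"] \<delta>0 t0 L' by auto
  have sub: "{x0..t0} \<subseteq> {p<..<q}"
    using x0 t0 by auto
  have "{x0..t0} \<subseteq> {p<..q}"
    using sub by auto
  then have "continuous_on {x0..t0} u" "continuous_on {x0..t0} \<theta>" "strict_mono_on {x0..t0} \<theta>"
    using sub by (auto intro: continuous_on_subset[OF continuous_u] continuous_on_subset[OF continuous_\<theta>]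
        monotone_on_subset[OF strict_mono_\<theta>])
  then obtain \<delta> where "0 < \<delta>" and \<delta>: "\<And>\<mu> \<nu>. \<mu> \<in> {x0..t0} \<Longrightarrow> \<nu> \<in> {x0..t0} \<Longrightarrow> \<mu> \<le> \<nu> \<Longrightarrow>
      u \<mu> + L \<le> u \<nu> \<Longrightarrow> \<delta> \<le> \<theta> \<nu> - \<theta> \<mu>"
    by (rule exists_rise_angle_lower_bound) (use L_gt_1 in auto)
  obtain k where "w0 / \<delta> < L' ^ k"
    using real_arch_pow[OF L'(1)] by blast
  then have small: "w0 / L' ^ k < \<delta>"
    using \<open>0 < \<delta>\<close> L' by (simp add: field_simps)
  obtain x where x: "x0 \<le> x" "x \<le> \<delta>0" "reach_le x (w0 / L' ^ k)"
    using reach_iterate[OF x0(1,2) \<delta>0(2) t0(2) \<delta>0(3) x0(4,3,5) L'] .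
  obtain \<mu> \<nu> where rise: "x \<le> \<mu>" "\<mu> < \<nu>" "\<nu> \<le> t0" "u \<nu> - u \<mu> = L" "window x \<nu>"
    by (rule exists_rise_window[of x t0]) (use x x0 \<delta>0 t0 in auto)
  have "\<delta> \<le> \<theta> \<nu> - \<theta> \<mu>"
    using \<delta>[of \<mu> \<nu>] rise x by auto
  also have "\<dots> \<le> \<theta> \<nu> - \<theta> x"
    using \<theta>_le_iff[of x \<mu>] rise x x0 t0 by auto
  also have "\<dots> \<le> w0 / L' ^ k"
    using x(3) rise(5) by (auto simp: reach_le_def)
  finally show False
    using small by simp
qed

end

lemma exists_support_polar_strict_mono:
  fixes u \<theta> :: "real \<Rightarrow> real"
  assumes "p < q" "continuous_on {p<..q} u" "continuous_on {p<..q} \<theta>"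
    "filterlim u at_bot (at_right p)" "strict_mono_on {p<..<q} \<theta>" "1 < L"
  obtains t \<tau> where "t \<in> {p<..<q}" "\<tau> \<in> {p<..t}" "u t - L \<le> u \<tau>"
    "local_extremum (polar_det u \<theta> t) \<tau>"
proof (rule ccontr)
  assume "\<not> thesis"
  then interpret spiral_without_near_support p q L u \<theta>
    using assms that by unfold_locales blast+
  show False
    by (rule contradiction)
qed

lemma exists_support_polar:
  fixes u \<theta> :: "real \<Rightarrow> real"
  assumes "p < q" "continuous_on {p<..q} u" "continuous_on {p<..q} \<theta>"
    "filterlim u at_bot (at_right p)" "1 < L"
  obtains t \<tau> where "t \<in> {p<..<q}" "\<tau> \<in> {p<..t}" "u t - L \<le> u \<tau>"
    "local_extremum (polar_det u \<theta> t) \<tau>"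
proof -
  have cont: "continuous_on {p<..<q} \<theta>"
    using assms(3) by (rule continuous_on_subset) auto
  then consider (extremum) t where "t \<in> {p<..<q}" "local_extremum \<theta> t"
    | (mono) "strict_mono_on {p<..<q} \<theta>" | (antimono) "strict_antimono_on {p<..<q} \<theta>"
    using local_extremum_or_strict_monotone[of "{p<..<q}" \<theta>] by (auto simp: is_interval_convex_1)
  then show thesis
  proof cases
    case extremum
    then have "isCont \<theta> t"
      using cont by (simp add: continuous_on_eq_continuous_at)
    then show thesis
      using that[of t t] extremum local_extremum_polar_det_self[of \<theta> t u] assms(5) by auto
  next
    case mono
    show thesis
      using that by (rule exists_support_polar_strict_mono[OF assms(1-4) mono assms(5)])
  next
    case antimono
    then have mono: "strict_mono_on {p<..<q} (\<lambda>x. - \<theta> x)"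
      by (auto simp: monotone_on_def)
    have cont': "continuous_on {p<..q} (\<lambda>x. - \<theta> x)"
      using assms(3) by (intro continuous_intros)
    obtain t \<tau> where t: "t \<in> {p<..<q}" "\<tau> \<in> {p<..t}" "u t - L \<le> u \<tau>"
        "local_extremum (polar_det u (\<lambda>x. - \<theta> x) t) \<tau>"
      by (rule exists_support_polar_strict_mono[OF assms(1,2) cont' assms(4) mono assms(5)])
    have "local_extremum (polar_det u \<theta> t) \<tau>"
      using t(4) by (simp add: polar_det_uminus)
    with t(1-3) show thesis
      by (rule that)
  qed
qed

section \<open>Plane curves\<close>

definition complex_of_vec2 :: "real^2 \<Rightarrow> complex" where
  "complex_of_vec2 v = Complex (v$1) (v$2)"

lemma complex_of_vec2_eq: "complex_of_vec2 v = complex_of_real (v$1) + \<i> * complex_of_real (v$2)"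
  by (simp add: complex_of_vec2_def Complex_eq)

lemma norm_complex_of_vec2 [simp]: "cmod (complex_of_vec2 v) = norm v"
  by (simp add: complex_of_vec2_def norm_vec_def L2_set_def sum_2 complex_norm)

lemma complex_of_vec2_eq_0_iff [simp]: "complex_of_vec2 v = 0 \<longleftrightarrow> v = 0"
  by (metis norm_complex_of_vec2 norm_eq_zero)

lemma Im_cnj_mult_complex_of_vec2: "Im (cnj (complex_of_vec2 v) * complex_of_vec2 w) = det2 v w"
  by (simp add: complex_of_vec2_def det2_def)

lemma continuous_on_complex_of_vec2:
  "continuous_on S f \<Longrightarrow> continuous_on S (\<lambda>x. complex_of_vec2 (f x))"
  unfolding complex_of_vec2_eq by (intro continuous_intros)

lemma exists_polar_form:
  fixes z :: "real \<Rightarrow> real^2"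
  assumes "continuous_on {p<..q} z" "\<And>x. x \<in> {p<..q} \<Longrightarrow> z x \<noteq> 0"
  obtains u \<theta> where "continuous_on {p<..q} u" "continuous_on {p<..q} \<theta>"
    "\<And>x. x \<in> {p<..q} \<Longrightarrow> norm (z x) = exp (u x)"
    "\<And>t x. t \<in> {p<..q} \<Longrightarrow> x \<in> {p<..q} \<Longrightarrow> det2 (z t) (z x) = polar_det u \<theta> t x"
proof -
  have "contractible {p<..q}"
    by (simp add: convex_imp_contractible)
  moreover have "continuous_on {p<..q} (\<lambda>x. complex_of_vec2 (z x))"
    using assms(1) by (rule continuous_on_complex_of_vec2)
  moreover have "complex_of_vec2 (z x) \<noteq> 0" if "x \<in> {p<..q}" for x
    using assms(2)[OF that] by simp
  ultimately obtain g where g: "continuous_on {p<..q} g"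
      "\<And>x. x \<in> {p<..q} \<Longrightarrow> complex_of_vec2 (z x) = exp (g x)"
    using continuous_logarithm_on_contractible by metis
  show thesis
  proof (rule that[of "\<lambda>x. Re (g x)" "\<lambda>x. Im (g x)"])
    show "continuous_on {p<..q} (\<lambda>x. Re (g x))" "continuous_on {p<..q} (\<lambda>x. Im (g x))"
      using g(1) by (auto intro!: continuous_intros)
    show "norm (z x) = exp (Re (g x))" if "x \<in> {p<..q}" for x
      using arg_cong[OF g(2)[OF that], of cmod] by simp
    show "det2 (z t) (z x) = polar_det (\<lambda>x. Re (g x)) (\<lambda>x. Im (g x)) t x"
      if "t \<in> {p<..q}" "x \<in> {p<..q}" for t x
      using Im_cnj_exp_mult_exp[of g t x] Im_cnj_mult_complex_of_vec2[of "z t" "z x"]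
      by (simp only: g(2)[OF that(1)] g(2)[OF that(2)])
  qed
qed

lemma exists_near_support_at_right:
  fixes z :: "real \<Rightarrow> real^2"
  assumes "p < q" "continuous_on {p<..q} z" "(z \<longlongrightarrow> 0) (at_right p)"
    "\<And>x. x \<in> {p<..q} \<Longrightarrow> z x \<noteq> 0" "1 < L"
  obtains t \<tau> where "t \<in> {p<..<q}" "\<tau> \<in> {p<..t}" "exp (- L) * norm (z t) \<le> norm (z \<tau>)"
    "local_extremum (\<lambda>x. det2 (z t) (z x)) \<tau>"
proof -
  obtain u \<theta> where cont: "continuous_on {p<..q} u" "continuous_on {p<..q} \<theta>"
    and norm_z: "\<And>x. x \<in> {p<..q} \<Longrightarrow> norm (z x) = exp (u x)"
    and det2_z: "\<And>t x. t \<in> {p<..q} \<Longrightarrow> x \<in> {p<..q} \<Longrightarrow> det2 (z t) (z x) = polar_det u \<theta> t x"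
    using exists_polar_form[OF assms(2,4)] by blast
  have "filterlim u at_bot (at_right p)"
    unfolding filterlim_at_bot_dense
  proof
    fix M
    have "\<forall>\<^sub>F x in at_right p. norm (z x) < exp M"
      using tendsto_norm_zero[OF assms(3)] by (rule order_tendstoD) simp
    moreover have "\<forall>\<^sub>F x in at_right p. x \<in> {p<..q}"
      using assms(1) by (auto simp: eventually_at_right_field intro!: exI[of _ q])
    ultimately show "\<forall>\<^sub>F x in at_right p. u x < M"
      by eventually_elim (simp add: norm_z)
  qed
  then obtain t \<tau> where t: "t \<in> {p<..<q}" "\<tau> \<in> {p<..t}" "u t - L \<le> u \<tau>"
      "local_extremum (polar_det u \<theta> t) \<tau>"
    by (rule exists_support_polar[OF assms(1) cont _ assms(5)])
  have "exp (- L) * norm (z t) = exp (u t - L)"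
    using t(1) by (simp add: norm_z exp_diff exp_minus field_simps)
  also have "\<dots> \<le> norm (z \<tau>)"
    using t(1-3) by (simp add: norm_z)
  finally have near: "exp (- L) * norm (z t) \<le> norm (z \<tau>)" .
  have "\<forall>\<^sub>F x in nhds \<tau>. x \<in> {p<..<q}"
    using t(1,2) by (intro eventually_nhds_in_open) auto
  then have "\<forall>\<^sub>F x in nhds \<tau>. polar_det u \<theta> t x = det2 (z t) (z x)"
    by eventually_elim (rule det2_z[symmetric], use t(1) in auto)
  then have "local_extremum (\<lambda>x. det2 (z t) (z x)) \<tau>"
    using t(4) by (rule local_extremum_cong)
  with t(1,2) near show thesis
    by (rule that)
qed

lemma local_extremum_neg_inverse:
  fixes f :: "real \<Rightarrow> real"
  assumes "local_extremum f x" "x \<noteq> 0"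
  shows "local_extremum (\<lambda>y. f (- 1 / y)) (- 1 / x)"
proof (rule local_extremum_compose[where h = "\<lambda>y. - 1 / y"])
  show "local_extremum f (- 1 / (- 1 / x))"
    using assms(1) by simp
  have "((\<lambda>y. - 1 / y) \<longlongrightarrow> - 1 / (- 1 / x)) (at (- 1 / x))"
    using assms(2) by (intro tendsto_intros) auto
  moreover have "- 1 / y \<noteq> - 1 / (- 1 / x)" if "y \<noteq> - 1 / x" for y
  proof
    assume "- 1 / y = - 1 / (- 1 / x)"
    then have "- 1 / (- 1 / y) = - 1 / x"
      by simp
    with that show False
      by simp
  qed
  then have "\<forall>\<^sub>F y in at (- 1 / x). - 1 / y \<noteq> - 1 / (- 1 / x)"
    by (auto simp: eventually_at_filter)
  ultimately show "filterlim (\<lambda>y. - 1 / y) (at (- 1 / (- 1 / x))) (at (- 1 / x))"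
    by (rule filterlim_atI)
qed

lemma exists_near_support_at_bot:
  fixes z :: "real \<Rightarrow> real^2"
  assumes "continuous_on {..q} z" "(z \<longlongrightarrow> 0) at_bot" "\<And>x. x \<le> q \<Longrightarrow> z x \<noteq> 0" "1 < L"
  obtains t \<tau> where "t < q" "\<tau> \<le> t" "exp (- L) * norm (z t) \<le> norm (z \<tau>)"
    "local_extremum (\<lambda>x. det2 (z t) (z x)) \<tau>"
proof -
  define r where "r = - 1 / min q (- 1)"
  define w where "w x = z (- 1 / x)" for x
  have "0 < r"
    by (simp add: r_def divide_simps)
  have inv_le_q: "- 1 / x \<le> q" if "x \<in> {0<..r}" for x
  proof -
    have "- 1 / x \<le> - 1 / r"
      using that by (simp add: divide_simps)
    then show ?thesis
      by (simp add: r_def)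
  qed
  have "continuous_on {0<..r} w"
    unfolding w_def using inv_le_q
    by (intro continuous_on_compose2[OF assms(1)]) (auto intro!: continuous_intros)
  moreover have "filterlim (\<lambda>x. - 1 / x) at_bot (at_right (0::real))"
    using filterlim_inverse_at_top_right by (simp add: filterlim_uminus_at_bot inverse_eq_divide)
  then have "(w \<longlongrightarrow> 0) (at_right 0)"
    unfolding w_def by (rule filterlim_compose[OF assms(2)])
  moreover have "w x \<noteq> 0" if "x \<in> {0<..r}" for x
    using assms(3) inv_le_q that by (simp add: w_def)
  ultimately obtain t' \<tau>' where t': "t' \<in> {0<..<r}" "\<tau>' \<in> {0<..t'}"
      "exp (- L) * norm (w t') \<le> norm (w \<tau>')" "local_extremum (\<lambda>x. det2 (w t') (w x)) \<tau>'"
    using exists_near_support_at_right[OF \<open>0 < r\<close> _ _ _ assms(4)] by blast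
  have "local_extremum (\<lambda>y. det2 (w t') (w (- 1 / y))) (- 1 / \<tau>')"
    using local_extremum_neg_inverse[OF t'(4)] t'(2) by simp
  moreover have "- 1 / t' < - 1 / r" "- 1 / \<tau>' \<le> - 1 / t'"
    using t'(1,2) by (auto simp: divide_simps)
  then have "- 1 / t' < q"
    by (simp add: r_def)
  ultimately show thesis
    using that[of "- 1 / t'" "- 1 / \<tau>'"] \<open>- 1 / \<tau>' \<le> - 1 / t'\<close> t'(3) by (simp add: w_def)
qed

lemma eventually_at_ereal_within:
  "\<forall>\<^sub>F x in at \<tau>. P (ereal x) \<Longrightarrow> \<forall>\<^sub>F y in at (ereal \<tau>) within I. P y"
  by (rule filter_leD[OF at_le[OF subset_UNIV]]) (simp add: at_ereal eventually_filtermap)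

lemma support_point_if_local_extremum:
  fixes \<gamma> :: "ereal \<Rightarrow> real^2"
  assumes "local_extremum (\<lambda>x. det2 (\<gamma> d - \<gamma> c) (\<gamma> (ereal x))) \<tau>" "ereal \<tau> \<in> {c..d}"
  shows "support_point \<gamma> I c d (ereal \<tau>)"
proof -
  let ?f = "\<lambda>y. det2 (\<gamma> d - \<gamma> c) (\<gamma> y)"
  from assms(1) have "(\<forall>\<^sub>F y in at (ereal \<tau>) within I. ?f y \<le> ?f (ereal \<tau>)) \<or>
      (\<forall>\<^sub>F y in at (ereal \<tau>) within I. ?f y \<ge> ?f (ereal \<tau>))"
    unfolding local_extremum_def
    using eventually_at_ereal_within[where P = "\<lambda>y. ?f y \<le> ?f (ereal \<tau>)" and I = I]
      eventually_at_ereal_within[where P = "\<lambda>y. ?f y \<ge> ?f (ereal \<tau>)" and I = I]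
    by blast
  then show ?thesis
    using assms(2) by (auto simp: support_point_def)
qed

lemma dist_le_DS:
  fixes \<gamma> :: "ereal \<Rightarrow> real^2"
  assumes "continuous_on {a..<b} \<gamma>" "t < b" "s \<in> supp_set \<gamma> a b t"
  shows "dist (\<gamma> a) (\<gamma> s) \<le> DS \<gamma> a b t"
proof -
  have "compact (\<gamma> ` {a..t})"
    using assms(2)
    by (intro compact_continuous_image continuous_on_subset[OF assms(1)]) (auto simp: compact_eq_closed)
  then obtain B where B: "\<forall>v\<in>\<gamma> ` {a..t}. norm v \<le> B"
    using compact_imp_bounded bounded_iff by blast
  have sub: "supp_set \<gamma> a b t \<subseteq> {a..t}"
    by (auto simp: supp_set_def)
  have "a \<in> {a..t}"
    using assms(3) by (auto simp: supp_set_def dest: less_le_trans)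
  have "dist (\<gamma> a) (\<gamma> \<tau>) \<le> B + B" if "\<tau> \<in> supp_set \<gamma> a b t" for \<tau>
  proof -
    have "norm (\<gamma> a) \<le> B" "norm (\<gamma> \<tau>) \<le> B"
      using B sub that \<open>a \<in> {a..t}\<close> by auto
    then show ?thesis
      using norm_triangle_ineq4[of "\<gamma> a" "\<gamma> \<tau>"] by (simp add: dist_norm)
  qed
  then have "bdd_above ((\<lambda>\<tau>. dist (\<gamma> a) (\<gamma> \<tau>)) ` supp_set \<gamma> a b t)"
    by (rule bdd_aboveI2)
  then show ?thesis
    unfolding DS_def using assms(3) by (intro cSup_upper) auto
qed

lemma ratio_DS_D_ge:
  fixes \<gamma> :: "ereal \<Rightarrow> real^2"
  assumes "continuous_on {a..<b} \<gamma>" "a < ereal \<tau>" "\<tau> \<le> t" "ereal t < b" "\<gamma> (ereal t) \<noteq> \<gamma> a"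
    "c * dist (\<gamma> a) (\<gamma> (ereal t)) \<le> dist (\<gamma> a) (\<gamma> (ereal \<tau>))"
    "local_extremum (\<lambda>x. det2 (\<gamma> (ereal t) - \<gamma> a) (\<gamma> (ereal x))) \<tau>"
  shows "ereal c \<le> ratio_DS_D \<gamma> a b (ereal t)"
proof -
  have "ereal \<tau> \<in> supp_set \<gamma> a b (ereal t)"
    using support_point_if_local_extremum[OF assms(7)] assms(2,3) by (auto simp: supp_set_def)
  then have "dist (\<gamma> a) (\<gamma> (ereal \<tau>)) \<le> DS \<gamma> a b (ereal t)"
    by (rule dist_le_DS[OF assms(1,4)])
  with assms(5,6) show ?thesis
    by (simp add: ratio_DS_D_def pos_le_divide_eq)
qed

lemma exists_near_support_at_right_ereal:
  fixes z :: "real \<Rightarrow> real^2" and a :: ereal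
  assumes "a < ereal q" "continuous_on {x. a < ereal x \<and> x \<le> q} z"
    "((\<lambda>y. z (real_of_ereal y)) \<longlongrightarrow> 0) (at_right a)"
    "\<And>x. a < ereal x \<Longrightarrow> x \<le> q \<Longrightarrow> z x \<noteq> 0" "1 < L"
  obtains t \<tau> where "a < ereal \<tau>" "\<tau> \<le> t" "t < q" "exp (- L) * norm (z t) \<le> norm (z \<tau>)"
    "local_extremum (\<lambda>x. det2 (z t) (z x)) \<tau>"
proof (cases a)
  case (real a0)
  have "a0 < q"
    using assms(1) real by simp
  have "{x. a < ereal x \<and> x \<le> q} = {a0<..q}"
    using real by auto
  then have "continuous_on {a0<..q} z"
    using assms(2) by simp
  moreover have "(z \<longlongrightarrow> 0) (at_right a0)"
    using assms(3) real by (simp add: at_right_ereal tendsto_compose_filtermap[symmetric] comp_def)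
  moreover have "z x \<noteq> 0" if "x \<in> {a0<..q}" for x
    using assms(4) that real by auto
  ultimately obtain t \<tau> where "t \<in> {a0<..<q}" "\<tau> \<in> {a0<..t}"
      "exp (- L) * norm (z t) \<le> norm (z \<tau>)" "local_extremum (\<lambda>x. det2 (z t) (z x)) \<tau>"
    using exists_near_support_at_right[OF \<open>a0 < q\<close> _ _ _ assms(5)] by blast
  then show thesis
    using that real by auto
next
  case MInf
  have "{x. a < ereal x \<and> x \<le> q} = {..q}"
    using MInf by auto
  then have "continuous_on {..q} z"
    using assms(2) by simp
  moreover have "(z \<longlongrightarrow> 0) at_bot"
    using assms(3) MInf by (simp add: at_right_MInf tendsto_compose_filtermap[symmetric] comp_def)
  ultimately obtain t \<tau> where "t < q" "\<tau> \<le> t"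
      "exp (- L) * norm (z t) \<le> norm (z \<tau>)" "local_extremum (\<lambda>x. det2 (z t) (z x)) \<tau>"
    using exists_near_support_at_bot[of q z L] assms(4,5) MInf by auto
  then show thesis
    using that MInf by auto
next
  case PInf
  then show thesis
    using assms(1) by simp
qed

lemma det2_diff_right: "det2 v (w - w') = det2 v w - det2 v w'"
  by (simp add: det2_def algebra_simps)

lemma exists_near_support_chord:
  fixes \<gamma> :: "ereal \<Rightarrow> real^2"
  assumes "continuous_on {a..ereal q} \<gamma>" "a < ereal q"
    "\<And>x. a < ereal x \<Longrightarrow> x \<le> q \<Longrightarrow> \<gamma> (ereal x) \<noteq> \<gamma> a" "1 < L"
  obtains t \<tau> where "a < ereal \<tau>" "\<tau> \<le> t" "t < q"
    "exp (- L) * dist (\<gamma> a) (\<gamma> (ereal t)) \<le> dist (\<gamma> a) (\<gamma> (ereal \<tau>))"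
    "local_extremum (\<lambda>x. det2 (\<gamma> (ereal t) - \<gamma> a) (\<gamma> (ereal x))) \<tau>"
proof -
  define z where "z = (\<lambda>x. \<gamma> (ereal x) - \<gamma> a)"
  have "continuous_on {x. a < ereal x \<and> x \<le> q} z"
    unfolding z_def
    by (intro continuous_intros continuous_on_compose2[OF assms(1) continuous_on_ereal[OF continuous_on_id]])
      auto
  moreover have "((\<lambda>y. z (real_of_ereal y)) \<longlongrightarrow> 0) (at_right a)"
  proof -
    have "((\<lambda>y. \<gamma> y - \<gamma> a) \<longlongrightarrow> 0) (at_right a)"
      using continuous_on_Icc_at_rightD[OF assms(1,2)] by (simp add: LIM_zero_iff)
    moreover have "\<forall>\<^sub>F y in at_right a. a < y \<and> y < ereal q"
      by (auto simp: eventually_at_right[OF assms(2)] intro!: exI[of _ "ereal q"] assms(2))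
    then have "\<forall>\<^sub>F y in at_right a. \<gamma> y - \<gamma> a = z (real_of_ereal y)"
      by eventually_elim (auto simp: z_def ereal_real)
    ultimately show ?thesis
      by (rule Lim_transform_eventually)
  qed
  moreover have "z x \<noteq> 0" if "a < ereal x" "x \<le> q" for x
    using assms(3)[OF that] by (simp add: z_def)
  ultimately obtain t \<tau> where "a < ereal \<tau>" "\<tau> \<le> t" "t < q" "exp (- L) * norm (z t) \<le> norm (z \<tau>)"
      "local_extremum (\<lambda>x. det2 (z t) (z x)) \<tau>"
    using exists_near_support_at_right_ereal[OF assms(2) _ _ _ assms(4)] by blast
  then show thesis
    using that[of \<tau> t] by (simp add: z_def dist_norm norm_minus_commute det2_diff_right)
qed

lemma exists_ratio_DS_D_ge:
  fixes \<gamma> :: "ereal \<Rightarrow> real^2"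
  assumes "continuous_on {a..<b} \<gamma>" "a < y" "y \<le> b" "0 < c" "c < exp (- 1)"
  obtains T where "T \<in> {a<..<y}" "ereal c \<le> ratio_DS_D \<gamma> a b T"
proof (cases "\<exists>T\<in>{a<..<y}. \<gamma> T = \<gamma> a")
  case True
  then show ?thesis
    using that by (auto simp: ratio_DS_D_def)
next
  case False
  define L where "L = - ln c"
  have "ln c < - 1"
    using assms(4,5) ln_less_cancel_iff[of c "exp (- 1)"] by simp
  then have "1 < L" "exp (- L) = c"
    using assms(4) by (auto simp: L_def)
  obtain q where q: "a < ereal q" "ereal q < y"
    using ereal_dense2[OF assms(2)] by blast
  have below_y: "ereal x < y" if "x \<le> q" for x
    using that q(2) by (metis ereal_less_eq(3) le_less_trans)
  have "continuous_on {a..ereal q} \<gamma>"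
    using q(2) assms(3) by (intro continuous_on_subset[OF assms(1)]) (auto dest: le_less_trans)
  moreover have "\<gamma> (ereal x) \<noteq> \<gamma> a" if "a < ereal x" "x \<le> q" for x
    using False that below_y by auto
  ultimately obtain t \<tau> where t\<tau>: "a < ereal \<tau>" "\<tau> \<le> t" "t < q"
      "c * dist (\<gamma> a) (\<gamma> (ereal t)) \<le> dist (\<gamma> a) (\<gamma> (ereal \<tau>))"
      "local_extremum (\<lambda>x. det2 (\<gamma> (ereal t) - \<gamma> a) (\<gamma> (ereal x))) \<tau>"
    using exists_near_support_chord[OF _ q(1) _ \<open>1 < L\<close>] \<open>exp (- L) = c\<close> by blast
  have "a < ereal t"
    using t\<tau>(1,2) by (metis ereal_less_eq(3) less_le_trans)
  then have T: "ereal t \<in> {a<..<y}"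
    using below_y t\<tau>(3) by simp
  then have "ereal c \<le> ratio_DS_D \<gamma> a b (ereal t)"
    using ratio_DS_D_ge[OF assms(1) t\<tau>(1,2) _ _ t\<tau>(4,5)] False assms(3) by auto
  with T show thesis
    by (rule that)
qed

lemma frequently_ratio_DS_D_ge:
  fixes \<gamma> :: "ereal \<Rightarrow> real^2"
  assumes "a < b" "continuous_on {a..<b} \<gamma>" "0 < c" "c < exp (- 1)"
  shows "\<exists>\<^sub>F T in at a within {a<..<b}. ereal c \<le> ratio_DS_D \<gamma> a b T"
  unfolding frequently_def eventually_at_topological
proof
  assume "\<exists>S. open S \<and> a \<in> S \<and> (\<forall>T\<in>S. T \<noteq> a \<longrightarrow> T \<in> {a<..<b} \<longrightarrow> \<not> ereal c \<le> ratio_DS_D \<gamma> a b T)"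
  then obtain S where S: "open S" "a \<in> S"
    "\<And>T. T \<in> S \<Longrightarrow> T \<noteq> a \<Longrightarrow> T \<in> {a<..<b} \<Longrightarrow> \<not> ereal c \<le> ratio_DS_D \<gamma> a b T"
    by auto
  obtain y where "a < y" "{a..<y} \<subseteq> S"
    using open_right[OF S(1,2) assms(1)] by blast
  obtain T where T: "T \<in> {a<..<min y b}" "ereal c \<le> ratio_DS_D \<gamma> a b T"
    using exists_ratio_DS_D_ge[OF assms(2) _ _ assms(3,4), of "min y b"] assms(1) \<open>a < y\<close> by auto
  then have "T \<in> S"
    using \<open>{a..<y} \<subseteq> S\<close> by auto
  with T show False
    using S(3)[of T] by auto
qed

theorem theorem1:
  fixes \<gamma> :: "ereal \<Rightarrow> real^2" and a b :: ereal
  assumes "a < b"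
    and "continuous_on {a..<b} \<gamma>"
    and "\<forall>U. open U \<and> a \<in> U \<longrightarrow> (\<exists>\<tau> \<in> U \<inter> {a..<b}. \<gamma> \<tau> \<noteq> \<gamma> a)"
  shows "Limsup (at a within {a<..<b}) (ratio_DS_D \<gamma> a b) \<ge> ereal (1 / exp 1)"
proof (rule Limsup_greatest)
  fix P assume P: "eventually P (at a within {a<..<b})"
  show "ereal (1 / exp 1) \<le> (SUP T\<in>Collect P. ratio_DS_D \<gamma> a b T)"
  proof (rule dense_le)
    fix r assume "r < ereal (1 / exp 1)"
    then obtain c where c: "max r 0 < ereal c" "ereal c < ereal (exp (- 1))"
      using ereal_dense2[of "max r 0" "ereal (exp (- 1))"] by (auto simp: exp_minus inverse_eq_divide)
    then have "\<exists>\<^sub>F T in at a within {a<..<b}. ereal c \<le> ratio_DS_D \<gamma> a b T \<and> P T"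
      using frequently_ratio_DS_D_ge[OF assms(1,2)] P by (auto intro: frequently_eventually_frequently)
    then obtain T where "ereal c \<le> ratio_DS_D \<gamma> a b T" "P T"
      by (auto dest: frequently_ex)
    then show "r \<le> (SUP T\<in>Collect P. ratio_DS_D \<gamma> a b T)"
      using c(1) by (auto intro!: SUP_upper2[of T])
  qed
qed

end
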